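(* In the concrete model with $M=2k$ and all $b_j\neq0$, suppose the angles $\theta_1,\dots,\theta_{2k}\in\mathbb{C}$ satisfy, with $\theta_0=\theta_{-1}=0$, $$\sin\theta_{2j}=\frac{b_{2j}}{\cos\theta_{2j-2}},\qquad \sin\theta_{2j-1}=\frac{b_{2j-1}}{\cos\theta_{2j-2}\cos\theta_{2j-3}\cos\theta_{2j}}\qquad(1\le j\le k),$$ with all $\cos\theta_j\neq0$, and suppose the couplings are chosen as $\beta_3=\frac{1}{1-b_2^2}$, $\beta_5=\frac{1}{1-b_2^2-b_4^2}$ with the remaining $\beta_{2m+1}$ ($m\ge3$) given by the recursion of the concrete model. Then $\beta_{2j-1}=\frac{1}{\cos^2\theta_{2j-4}\cos^2\theta_{2j-2}}$ for $2\le j\le k$, and the transfer matrix at $u=-1$ factorizes as $T_{2k}(-1)=\mathcal{V}_{2k}$.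
   Context: Concrete model. Fix an integer $M\ge1$ and complex numbers $b_1,\dots,b_M$. Let $h_1,\dots,h_M$ be elements of a unital associative complex algebra satisfying $h_m^2=b_m^2\mathbb{1}$, $h_mh_{m+1}=-h_{m+1}h_m$, $h_mh_{m+2}=-h_{m+2}h_m$, and $h_mh_l=h_lh_m$ for $|l-m|>2$ (e.g. $h_m=b_m\sigma^z_m\sigma^z_{m+1}\sigma^x_{m+2}$ on a spin chain). Set $h_j:=0$, $b_j:=0$ for $j\le 0$ or $j>M$. Let $\beta_3,\beta_5$ be arbitrary complex numbers and define $\beta_{2m+1}:=\beta_{2m-1}/(b_{2m-4}^2\beta_{2m-3}-b_{2m}^2\beta_{2m-1}+1)$ for $m\ge3$ (denominators assumed nonzero). For $2\le m\le\lfloor M/2\rfloor$ put $\bar h_{2m+1}:=\beta_{2m-1}h_{2m-2}h_{2m-3}h_{2m}$ and $\bar b_{2m+1}:=\beta_{2m-1}b_{2m-2}b_{2m-3}b_{2m}$ (so $\bar h_{2m+1}^2=\bar b_{2m+1}^2\mathbb{1}$); otherwise $\bar h_{2m+1}:=0$, $\bar b_{2m+1}:=0$. For $1\le j\le M$, the model of size $j$ (same couplings) has frustration graph $G_j$ with vertices $h_1,\dots,h_j$ and $\bar h_{2m+1}$ for $2\le m\le\lfloor j/2\rfloor$, and edges $h_i\sim h_l$ iff $|i-l|\in\{1,2\}$; $\bar h_{2m-1}\sim h_l$ iff $l\in\{2m-7,2m-5,2m-3,2m-1,2m-2,2m\}$; $\bar h_{2m-1}\sim\bar h_{2m'-1}$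 iff $|m-m'|=1$ (adjacent vertices anticommute, non-adjacent distinct ones commute). Charges: $Q_j^{(k)}:=\sum_{S}\prod_{v\in S}v$, the sum over independent sets $S$ of $G_j$ of size $k$ ($Q_j^{(0)}=\mathbb{1}$). Hamiltonian $H_j:=Q_j^{(1)}=\sum_{l=1}^j h_l+\sum_{m=2}^{\lfloor j/2\rfloor}\beta_{2m-1}h_{2m-2}h_{2m-3}h_{2m}$. Transfer matrix $T_j(u):=\sum_{k\ge0}(-u)^kQ_j^{(k)}$ for $u\in\mathbb{C}$, with $T_j(u):=\mathbb{1}$ for $j\le 0$. Circuit: local gates $g_j:=\cos(\theta_j/2)\mathbb{1}+\sin(\theta_j/2)\,b_j^{-1}h_j$; $G_{2k}:=(g_2g_1)(g_4g_3)\cdots(g_{2k}g_{2k-1})$, $G_{2k}^{\top}:=(g_{2k-1}g_{2k})\cdots(g_3g_4)(g_1g_2)$ (reversed order); $\mathcal{V}_{2k}:=G_{2k}G_{2k}^{\top}$. *)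

theory Defs
  imports Complex_Main "HOL-Library.Product_Lexorder"
begin

text \<open>A unital associative complex algebra is modelled as a ring type 'a together
with a ring homomorphism c from the complex numbers into the centre of 'a
(scalar multiplication z * x is c z * x).\<close>
definition alg_emb :: "(complex \<Rightarrow> 'a::ring_1) \<Rightarrow> bool" where
  "alg_emb c \<longleftrightarrow> c 0 = 0 \<and> c 1 = 1 \<and> (\<forall>x y. c (x + y) = c x + c y)
     \<and> (\<forall>x y. c (x * y) = c x * c y) \<and> (\<forall>z a. c z * a = a * c z)"

text \<open>betaf b x y m = beta_(2m+1), with beta_3 = x, beta_5 = y and the recursion
 beta_(2m+1) = beta_(2m-1) / (b_(2m-4)^2 beta_(2m-3) - b_(2m)^2 beta_(2m-1) + 1), m >= 3.
 (The value at m = 0 is never used.)\<close>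
fun betaf :: "(int \<Rightarrow> complex) \<Rightarrow> complex \<Rightarrow> complex \<Rightarrow> nat \<Rightarrow> complex" where
  "betaf b x y 0 = 0"
| "betaf b x y (Suc 0) = x"
| "betaf b x y (Suc (Suc 0)) = y"
| "betaf b x y (Suc (Suc (Suc n))) =
     betaf b x y (Suc (Suc n)) /
       ((b (2 * int (n + 3) - 4))\<^sup>2 * betaf b x y (Suc n)
        - (b (2 * int (n + 3)))\<^sup>2 * betaf b x y (Suc (Suc n)) + 1)"

text \<open>Vertices of the frustration graph: (0, l) stands for h_l, (1, m) stands for
 the barred generator hbar_(2m+1).\<close>
type_synonym vtx = "nat \<times> int"

definition vset :: "int \<Rightarrow> vtx set" where
  "vset j = {(0, l) | l. 1 \<le> l \<and> l \<le> j} \<union> {(1, m) | m. 2 \<le> m \<and> m \<le> j div 2}"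

text \<open>hbar_(2m+1) ~ h_l iff l in {2m-5, 2m-3, 2m-1, 2m+1, 2m, 2m+2}
 (this is the rule for hbar_(2m'-1) with m' = m + 1).\<close>
definition bar_adj :: "int \<Rightarrow> int \<Rightarrow> bool" where
  "bar_adj m l \<longleftrightarrow> l \<in> {2*m - 5, 2*m - 3, 2*m - 1, 2*m + 1, 2*m, 2*m + 2}"

fun adj :: "vtx \<Rightarrow> vtx \<Rightarrow> bool" where
  "adj (a, x) (a', y) =
     ((a = 0 \<and> a' = 0 \<and> \<bar>x - y\<bar> \<in> {1, 2})
    \<or> (a = 1 \<and> a' = 0 \<and> bar_adj x y)
    \<or> (a = 0 \<and> a' = 1 \<and> bar_adj y x)
    \<or> (a = 1 \<and> a' = 1 \<and> \<bar>x - y\<bar> = 1))"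

definition indep :: "vtx set \<Rightarrow> vtx set \<Rightarrow> bool" where
  "indep V S \<longleftrightarrow> S \<subseteq> V \<and> (\<forall>u\<in>S. \<forall>v\<in>S. \<not> adj u v)"

text \<open>Operator attached to a vertex: h_l, resp.
 hbar_(2m+1) = beta_(2m-1) h_(2m-2) h_(2m-3) h_(2m).\<close>
fun vval :: "(complex \<Rightarrow> 'a::ring_1) \<Rightarrow> (int \<Rightarrow> complex) \<Rightarrow> complex \<Rightarrow> complex
              \<Rightarrow> (int \<Rightarrow> 'a) \<Rightarrow> vtx \<Rightarrow> 'a" where
  "vval c b x y h (a, l) =
     (if a = 0 then h l
      else c (betaf b x y (nat l - 1)) * h (2*l - 2) * h (2*l - 3) * h (2*l))"

text \<open>Q_j^(k): sum over independent sets of size k of the product of their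
 (pairwise commuting) vertices; the product is taken in the increasing order
 of vertices, which does not matter since they commute.\<close>
definition charge :: "(complex \<Rightarrow> 'a::ring_1) \<Rightarrow> (int \<Rightarrow> complex) \<Rightarrow> complex \<Rightarrow> complex
              \<Rightarrow> (int \<Rightarrow> 'a) \<Rightarrow> int \<Rightarrow> nat \<Rightarrow> 'a" where
  "charge c b x y h j k =
     (\<Sum>S \<in> {S. indep (vset j) S \<and> card S = k}.
        prod_list (map (vval c b x y h) (sorted_list_of_set S)))"

definition transfer :: "(complex \<Rightarrow> 'a::ring_1) \<Rightarrow> (int \<Rightarrow> complex) \<Rightarrow> complex \<Rightarrow> complex
              \<Rightarrow> (int \<Rightarrow> 'a) \<Rightarrow> int \<Rightarrow> complex \<Rightarrow> 'a" where
  "transfer c b x y h j u =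
     (if j \<le> 0 then 1
      else (\<Sum>k \<in> {0..card (vset j)}. c ((- u) ^ k) * charge c b x y h j k))"

definition gate :: "(complex \<Rightarrow> 'a::ring_1) \<Rightarrow> (int \<Rightarrow> complex) \<Rightarrow> (int \<Rightarrow> complex)
              \<Rightarrow> (int \<Rightarrow> 'a) \<Rightarrow> int \<Rightarrow> 'a" where
  "gate c b \<theta> h j = c (cos (\<theta> j / 2)) + c (sin (\<theta> j / 2) / b j) * h j"

text \<open>G_2k = (g2 g1)(g4 g3)...(g_2k g_2k-1),  G_2k^T = (g_2k-1 g_2k)...(g1 g2),
 V_2k = G_2k G_2k^T.\<close>
definition circV :: "(complex \<Rightarrow> 'a::ring_1) \<Rightarrow> (int \<Rightarrow> complex) \<Rightarrow> (int \<Rightarrow> complex)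
              \<Rightarrow> (int \<Rightarrow> 'a) \<Rightarrow> nat \<Rightarrow> 'a" where
  "circV c b \<theta> h k =
     prod_list (map (\<lambda>i. gate c b \<theta> h (2*i) * gate c b \<theta> h (2*i - 1)) [1..int k])
   * prod_list (map (\<lambda>i. gate c b \<theta> h (2*i - 1) * gate c b \<theta> h (2*i)) (rev [1..int k]))"

end

theory Submission
  imports Defs "HOL-Library.Multiset"
begin

text \<open>
  At u = -1 the transfer matrix is the sum, over all independent sets of the frustration graph,
  of the products of their (pairwise commuting) vertex operators. Deleting a vertex v splits
  such a sum as T(G) = T(G - v) + v T(G - N[v]); peeling off the last few vertices this way
  gives a five-term recursion for T_2k(-1) in terms of T_2k-2(-1), ..., T_2k-8(-1).

  On the circuit side, with the conjugate gates gbar_j = cos(theta_j/2) - sin(theta_j/2) h_j / b_j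
  one has g_j h_i = h_i gbar_j whenever h_i, h_j anticommute and gbar_j g_j = cos theta_j.
  Moving h's through the outermost gates expresses V_2k through V_2k-2, ..., V_2k-8 with
  trigonometric coefficients, and the angle conditions turn these into 1, 1 + beta b^2 and beta,
  where beta_2j-1 = 1 / (cos^2 theta_2j-4 cos^2 theta_2j-2) follows from the beta recursion by
  induction. Both sides satisfy the same recursion with the same initial values.
\<close>

section \<open>Products in noncommutative rings\<close>

lemma prod_list_commute:
  fixes f :: "'b \<Rightarrow> 'a::monoid_mult"
  assumes "\<And>y. y \<in> set ys \<Longrightarrow> a * f y = f y * a"
  shows "a * prod_list (map f ys) = prod_list (map f ys) * a"
  using assms
proof (induction ys)
  case (Cons y ys)
  then have "a * (f y * prod_list (map f ys)) = f y * (a * prod_list (map f ys))"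
    by (metis list.set_intros(1) mult.assoc)
  also have "\<dots> = f y * (prod_list (map f ys) * a)" using Cons by simp
  finally show ?case by (simp add: mult.assoc)
qed simp

lemma prod_list_mset_eq:
  fixes f :: "'b \<Rightarrow> 'a::monoid_mult"
  assumes "mset xs = mset ys"
    and "\<And>x y. x \<in> set xs \<Longrightarrow> y \<in> set xs \<Longrightarrow> f x * f y = f y * f x"
  shows "prod_list (map f xs) = prod_list (map f ys)"
  using assms
proof (induction xs arbitrary: ys)
  case (Cons x xs)
  have "x \<in> set ys" using Cons.prems(1) by (metis list.set_intros(1) set_mset_mset)
  then obtain ys1 ys2 where ys: "ys = ys1 @ x # ys2" by (meson split_list)
  have "set ys1 \<subseteq> set (x # xs)"
    using Cons.prems(1) ys by (metis Un_iff set_append set_mset_mset subsetI)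
  then have "a * f x = f x * a" if "a \<in> f ` set ys1" for a
    using that Cons.prems(2) by auto
  then have x_ys1: "f x * prod_list (map f ys1) = prod_list (map f ys1) * f x"
    using prod_list_commute[of ys1 "f x" f] by auto
  have "prod_list (map f ys) = f x * prod_list (map f (ys1 @ ys2))"
    using ys by (simp add: x_ys1 flip: mult.assoc)
  also have "\<dots> = f x * prod_list (map f xs)"
    using Cons.IH[of "ys1 @ ys2"] Cons.prems ys by simp
  finally show ?case by simp
qed simp

lemma sign_commute_mult_right:
  fixes x a d :: "'a::ring_1"
  assumes "x * a = of_int s * (a * x)" and "x * d = of_int t * (d * x)"
  shows "x * (a * d) = of_int (s * t) * ((a * d) * x)"
proof -
  have "x * (a * d) = of_int s * (a * (x * d))"
    by (simp only: assms(1) flip: mult.assoc)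
  also have "\<dots> = of_int s * ((a * of_int t) * (d * x))"
    by (simp only: assms(2) mult.assoc)
  also have "\<dots> = of_int (s * t) * ((a * d) * x)"
    by (simp only: mult_of_int_commute[of t a, symmetric] of_int_mult mult.assoc)
  finally show ?thesis .
qed

lemma sign_commute_mult_left:
  fixes a d y :: "'a::ring_1"
  assumes "a * y = of_int s * (y * a)" and "d * y = of_int t * (y * d)"
  shows "(a * d) * y = of_int (s * t) * (y * (a * d))"
proof -
  have "(a * d) * y = (a * of_int t) * (y * d)"
    by (simp only: assms(2) mult.assoc)
  also have "\<dots> = of_int t * ((a * y) * d)"
    by (simp only: mult_of_int_commute[of t a, symmetric] mult.assoc)
  also have "\<dots> = of_int (t * s) * (y * (a * d))"
    by (simp only: assms(1) of_int_mult mult.assoc)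
  finally show ?thesis by (simp only: mult.commute[of t s])
qed

section \<open>Sums over independent sets of the frustration graph\<close>

lemma adj_sym: "adj u w = adj w u"
  by (cases u; cases w) (auto simp: abs_minus_commute)

lemma adj_irrefl: "\<not> adj u u"
  by (cases u) auto

definition indep_prod :: "(vtx \<Rightarrow> 'a::monoid_mult) \<Rightarrow> vtx set \<Rightarrow> 'a" where
  "indep_prod f S = prod_list (map f (sorted_list_of_set S))"

definition indep_sum :: "(vtx \<Rightarrow> 'a::semiring_1) \<Rightarrow> vtx set \<Rightarrow> 'a" where
  "indep_sum f X = (\<Sum>S \<in> {S. indep X S}. indep_prod f S)"

lemma indep_sum_empty: "indep_sum f {} = 1"
proof -
  have "{S. indep {} S} = {{}}" by (auto simp: indep_def)
  then show ?thesis by (simp add: indep_sum_def indep_prod_def)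
qed

lemma indep_prod_insert:
  assumes "finite S" "v \<notin> S"
    and "\<And>u w. u \<in> insert v S \<Longrightarrow> w \<in> insert v S \<Longrightarrow> f u * f w = f w * f u"
  shows "indep_prod f (insert v S) = f v * indep_prod f S"
proof -
  have "mset (sorted_list_of_set (insert v S)) = mset (v # sorted_list_of_set S)"
    using assms by (simp add: set_eq_iff_mset_eq_distinct[symmetric])
  moreover have "set (sorted_list_of_set (insert v S)) = insert v S"
    using assms(1) by (metis finite_insert set_sorted_list_of_set)
  ultimately have "prod_list (map f (sorted_list_of_set (insert v S)))
      = prod_list (map f (v # sorted_list_of_set S))"
    using assms(3) by (intro prod_list_mset_eq) auto
  then show ?thesis
    unfolding indep_prod_def by simp
qed

lemma indep_sets_delete_vertex:
  assumes v: "v \<in> X"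
  shows "{S. indep X S} = {S. indep (X - {v}) S} \<union> insert v ` {S. indep (X - {v} - {w. adj v w}) S}"
    (is "_ = ?A0 \<union> insert v ` ?A1")
proof (intro set_eqI iffI)
  fix S assume "S \<in> {S. indep X S}"
  then have S: "indep X S" by simp
  show "S \<in> ?A0 \<union> insert v ` ?A1"
  proof (cases "v \<in> S")
    case True
    then have "S = insert v (S - {v})" "S - {v} \<in> ?A1" using S by (auto simp: indep_def)
    then show ?thesis by blast
  qed (use S in \<open>auto simp: indep_def\<close>)
next
  fix S assume "S \<in> ?A0 \<union> insert v ` ?A1"
  then show "S \<in> {S. indep X S}"
    using v adj_irrefl adj_sym by (auto simp: indep_def; blast)
qed

lemma indep_sum_delete:
  assumes fin: "finite X" and v: "v \<in> X"
    and comm: "\<And>u w. u \<in> X \<Longrightarrow> w \<in> X \<Longrightarrow> \<not> adj u w \<Longrightarrow> f u * f w = f w * f u"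
  shows "indep_sum f X = indep_sum f (X - {v}) + f v * indep_sum f (X - {v} - {w. adj v w})"
proof -
  let ?A0 = "{S. indep (X - {v}) S}" and ?A1 = "{S. indep (X - {v} - {w. adj v w}) S}"
  have fin_A: "finite ?A0" "finite ?A1"
    by (auto intro: finite_subset[of _ "Pow X"] simp: indep_def fin)
  have "indep_prod f (insert v S) = f v * indep_prod f S" if "S \<in> ?A1" for S
  proof (rule indep_prod_insert)
    show "finite S" using that fin by (auto simp: indep_def intro: finite_subset)
    show "v \<notin> S" using that by (auto simp: indep_def)
    show "f u * f w = f w * f u" if "u \<in> insert v S" "w \<in> insert v S" for u w
    proof (rule comm)
      have S: "S \<subseteq> X - {v} - {w. adj v w}" "\<forall>u\<in>S. \<forall>w\<in>S. \<not> adj u w"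
        using \<open>S \<in> ?A1\<close> by (simp_all add: indep_def)
      then show "u \<in> X" "w \<in> X" using that v by auto
      show "\<not> adj u w"
        using that S adj_irrefl[of v] adj_sym[of _ v] by blast
    qed
  qed
  moreover have "inj_on (insert v) ?A1"
    by (rule inj_onI) (auto simp: indep_def; blast)
  moreover have "?A0 \<inter> insert v ` ?A1 = {}" by (auto simp: indep_def)
  ultimately show ?thesis
    unfolding indep_sum_def indep_sets_delete_vertex[OF v] using fin_A
    by (simp add: sum.union_disjoint sum.reindex sum_distrib_left)
qed

lemma vset_nonpos: "j \<le> 0 \<Longrightarrow> vset j = {}"
  by (auto simp: vset_def)

lemma finite_vset: "finite (vset j)"
  by (rule finite_subset[of _ "Pair 0 ` {1..j} \<union> Pair 1 ` {2..j div 2}"]) (auto simp: vset_def)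

lemma transfer_minus_one:
  assumes "c 1 = 1"
  shows "transfer c b x y h j (-1) = indep_sum (vval c b x y h) (vset j)"
proof (cases "j \<le> 0")
  case True
  then show ?thesis by (simp add: transfer_def vset_nonpos indep_sum_empty)
next
  case False
  let ?A = "{S. indep (vset j) S}"
  have fin_A: "finite ?A" by (auto intro: finite_subset[of _ "Pow (vset j)"] simp: indep_def finite_vset)
  have card_A: "card ` ?A \<subseteq> {0..card (vset j)}" by (auto simp: indep_def finite_vset card_mono)
  have "(\<Sum>k\<in>{0..card (vset j)}. \<Sum>S\<in>{S \<in> ?A. card S = k}. indep_prod (vval c b x y h) S)
      = indep_sum (vval c b x y h) (vset j)"
    unfolding indep_sum_def by (rule sum.group[OF fin_A _ card_A]) simp
  then show ?thesis
    using False assms by (simp add: transfer_def charge_def indep_prod_def)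
qed

lemma vset_fst_le_1: "\<forall>u\<in>vset j. fst u \<le> 1"
  by (auto simp: vset_def)

lemma mem_vset:
  "(a, l) \<in> vset j \<longleftrightarrow> (a = 0 \<and> 1 \<le> l \<and> l \<le> j) \<or> (a = 1 \<and> 2 \<le> l \<and> 2 * l \<le> j)"
  by (auto simp: vset_def)

lemma adj_vertex_iff: "adj (0, x) (a, y) \<longleftrightarrow> (a = 0 \<and> (y = x - 2 \<or> y = x - 1 \<or> y = x + 1 \<or> y = x + 2))
   \<or> (a = 1 \<and> (x = 2*y - 5 \<or> x = 2*y - 3 \<or> x = 2*y - 1 \<or> x = 2*y + 1 \<or> x = 2*y \<or> x = 2*y + 2))"
  by (auto simp: bar_adj_def abs_if)

text \<open>Stated with Suc 0: that is the form the label 1 takes once the simplifier has split a vertex pair.\<close>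

lemma adj_bar_vertex_iff: "adj (Suc 0, x) (a, y) \<longleftrightarrow> (a = 1 \<and> (y = x - 1 \<or> y = x + 1))
   \<or> (a = 0 \<and> (y = 2*x - 5 \<or> y = 2*x - 3 \<or> y = 2*x - 1 \<or> y = 2*x + 1 \<or> y = 2*x \<or> y = 2*x + 2))"
  by (auto simp: bar_adj_def abs_if)

lemmas vset_adj_simps = mem_vset adj_vertex_iff adj_bar_vertex_iff

lemma vset_even_minus_top:
  "2 \<le> m \<Longrightarrow> vset (2*m) - {(0, 2*m)} = insert (1, m) (vset (2*m - 1))"
  by (rule set_eqI, case_tac x) (simp add: mem_vset, arith)

lemma vset_even_minus_top_nbhd:
  "2 \<le> m \<Longrightarrow> vset (2*m) - {(0, 2*m)} - {w. adj (0, 2*m) w} = vset (2*m - 3)"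
  by (rule set_eqI, case_tac x) (simp add: vset_adj_simps del: adj.simps, arith)

lemma bar_vertex_notin_vset_odd: "(1, m) \<notin> vset (2*m - 1)"
  by (simp add: mem_vset)

lemma vset_odd_minus_bar_nbhd:
  "2 \<le> m \<Longrightarrow> vset (2*m - 1) - {w. adj (1, m) w} = insert (0, 2*m - 2) (vset (2*m - 4) - {(0, 2*m - 5)})"
  by (rule set_eqI, case_tac x) (simp add: vset_adj_simps del: adj.simps, arith)

lemma vset_odd_minus_top: "1 \<le> m \<Longrightarrow> vset (2*m - 1) - {(0, 2*m - 1)} = vset (2*m - 2)"
  by (rule set_eqI, case_tac x) (simp add: mem_vset, arith)

lemma vset_odd_minus_top_nbhd:
  "1 \<le> m \<Longrightarrow> vset (2*m - 1) - {(0, 2*m - 1)} - {w. adj (0, 2*m - 1) w} = vset (2*m - 4)"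
  by (rule set_eqI, case_tac x) (simp add: vset_adj_simps del: adj.simps, arith)

lemma vset_even_minus_odd_top_nbhd:
  "1 \<le> m \<Longrightarrow> vset (2*m) - {(0, 2*m - 1)} - {w. adj (0, 2*m - 1) w} = vset (2*m - 4)"
  by (rule set_eqI, case_tac x) (simp add: vset_adj_simps del: adj.simps, arith)

lemma vset_minus_second_top_nbhd:
  "2 \<le> m \<Longrightarrow> vset (2*m - 4) - {(0, 2*m - 5)} - {w. adj (0, 2*m - 2) w} = vset (2*m - 6)"
  by (rule set_eqI, case_tac x) (simp add: vset_adj_simps del: adj.simps, arith)

lemma vset_2_minus_top: "vset 2 - {(0, 2)} = vset 1"
  by (rule set_eqI, case_tac x) (simp add: mem_vset, arith)

lemma vset_2_minus_top_nbhd: "vset 2 - {(0, 2)} - {w. adj (0, 2) w} = {}"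
  by (rule set_eqI, case_tac x) (simp add: vset_adj_simps del: adj.simps, arith)

section \<open>The algebra generated by the chain\<close>

definition comm_sign :: "int \<Rightarrow> int \<Rightarrow> int" where
  "comm_sign i j = (if \<bar>i - j\<bar> \<in> {1, 2} then -1 else 1)"

definition bar_sign :: "int \<Rightarrow> int \<Rightarrow> int" where
  "bar_sign l m = comm_sign l (2*m - 2) * comm_sign l (2*m - 3) * comm_sign l (2*m)"

lemma bar_sign_nonadj: "\<not> bar_adj m l \<Longrightarrow> bar_sign l m = 1"
  unfolding bar_sign_def comm_sign_def bar_adj_def by (simp add: abs_if)

lemma bar_sign_bar: "\<bar>m - m'\<bar> \<noteq> 1 \<Longrightarrow> m \<noteq> m' \<Longrightarrow>
    bar_sign (2*m - 2) m' * bar_sign (2*m - 3) m' * bar_sign (2*m) m' = 1"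
  unfolding bar_sign_def comm_sign_def by (simp add: abs_if) presburger

locale complex_algebra =
  fixes c :: "complex \<Rightarrow> 'a::ring_1"
  assumes alg_emb: "alg_emb c"
begin

lemma c_0 [simp]: "c 0 = 0" and c_1 [simp]: "c 1 = 1"
  and c_add: "c (x + y) = c x + c y" and c_mult: "c (x * y) = c x * c y"
  and c_central: "c z * a = a * c z"
  using alg_emb unfolding alg_emb_def by blast+

lemma c_minus: "c (- z) = - c z"
  by (metis add.right_inverse add_eq_0_iff c_0 c_add)

lemma c_diff: "c (x - y) = c x - c y"
  by (metis c_add c_minus diff_conv_add_uminus)

lemma c_left_commute: "a * (c z * d) = c z * (a * d)"
  by (metis c_central mult.assoc)

lemma c_mult_left: "c z * (c w * d) = c (z * w) * d"
  by (simp add: c_mult mult.assoc)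

end

locale chain_algebra = complex_algebra c for c :: "complex \<Rightarrow> 'a::ring_1" +
  fixes h :: "int \<Rightarrow> 'a" and b :: "int \<Rightarrow> complex" and K :: nat and \<beta>3 \<beta>5 :: complex
  assumes h_out: "\<And>j. j < 1 \<or> j > 2 * int K \<Longrightarrow> h j = 0"
    and b_out: "\<And>j. j < 1 \<or> j > 2 * int K \<Longrightarrow> b j = 0"
    and h_sq: "\<And>m. 1 \<le> m \<Longrightarrow> m \<le> 2 * int K \<Longrightarrow> h m * h m = c ((b m)\<^sup>2)"
    and h_ac1: "\<And>m. 1 \<le> m \<Longrightarrow> m + 1 \<le> 2 * int K \<Longrightarrow> h m * h (m + 1) = - (h (m + 1) * h m)"
    and h_ac2: "\<And>m. 1 \<le> m \<Longrightarrow> m + 2 \<le> 2 * int K \<Longrightarrow> h m * h (m + 2) = - (h (m + 2) * h m)"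
    and h_comm: "\<And>m l. 1 \<le> m \<Longrightarrow> m \<le> 2 * int K \<Longrightarrow> 1 \<le> l \<Longrightarrow> l \<le> 2 * int K \<Longrightarrow>
                   \<bar>l - m\<bar> > 2 \<Longrightarrow> h m * h l = h l * h m"
    and b_nz: "\<And>j. 1 \<le> j \<Longrightarrow> j \<le> 2 * int K \<Longrightarrow> b j \<noteq> 0"
begin

lemma h_zero: "\<not> (1 \<le> j \<and> j \<le> 2 * int K) \<Longrightarrow> h j = 0"
  using h_out by force

lemma h_square: "h m * h m = c ((b m)\<^sup>2)"
  using h_sq[of m] h_zero[of m] b_out[of m] by (cases "1 \<le> m \<and> m \<le> 2 * int K") auto

lemma h_square_left: "h m * (h m * y) = c ((b m)\<^sup>2) * y"
  by (simp add: h_square flip: mult.assoc)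

lemma h_anticommute:
  assumes "\<bar>i - j\<bar> \<in> {1, 2}" shows "h i * h j = - (h j * h i)"
proof (cases "1 \<le> i \<and> i \<le> 2 * int K \<and> 1 \<le> j \<and> j \<le> 2 * int K")
  case True
  consider "j = i + 1" | "j = i + 2" | "i = j + 1" | "i = j + 2"
    using assms by (auto simp: abs_if split: if_splits)
  then show ?thesis
  proof cases
    case 1 then show ?thesis using h_ac1[of i] True by simp
  next
    case 2 then show ?thesis using h_ac2[of i] True by simp
  next
    case 3 then show ?thesis using h_ac1[of j] True by (metis add.inverse_inverse)
  next
    case 4 then show ?thesis using h_ac2[of j] True by (metis add.inverse_inverse)
  qed
qed (use h_zero in auto)

lemma h_commute:
  assumes "\<bar>i - j\<bar> \<notin> {1, 2}" shows "h i * h j = h j * h i"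
proof (cases "1 \<le> i \<and> i \<le> 2 * int K \<and> 1 \<le> j \<and> j \<le> 2 * int K \<and> i \<noteq> j")
  case True
  then show ?thesis using h_comm[of i j] assms by auto
qed (use h_zero in auto)

lemma h_sign_commute: "h i * h j = of_int (comm_sign i j) * (h j * h i)"
  using h_anticommute[of i j] h_commute[of i j] by (auto simp: comm_sign_def)

lemma h_c_commute: "h i * c z = c z * h i"
  by (simp add: c_central)

text \<open>As a simp rule c_left_commute loops when a is itself of the form c w; this instance does not.\<close>

lemma h_c_left_commute: "h i * (c z * d) = c z * (h i * d)"
  by (rule c_left_commute)

definition bar_op :: "int \<Rightarrow> 'a" where
  "bar_op m = h (2*m - 2) * h (2*m - 3) * h (2*m)"

lemma h_bar_op_sign_commute: "h l * bar_op m = of_int (bar_sign l m) * (bar_op m * h l)"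
  unfolding bar_op_def bar_sign_def
  by (intro sign_commute_mult_right h_sign_commute)

lemma h_bar_op_commute: "\<not> bar_adj m l \<Longrightarrow> h l * bar_op m = bar_op m * h l"
  by (simp add: h_bar_op_sign_commute bar_sign_nonadj)

lemma bar_op_commute:
  assumes "\<bar>m - m'\<bar> \<noteq> 1" shows "bar_op m * bar_op m' = bar_op m' * bar_op m"
proof (cases "m = m'")
  case False
  have "bar_op m * bar_op m' =
      of_int (bar_sign (2*m - 2) m' * bar_sign (2*m - 3) m' * bar_sign (2*m) m') * (bar_op m' * bar_op m)"
    unfolding bar_op_def[of m]
    by (intro sign_commute_mult_left h_bar_op_sign_commute)
  then show ?thesis using bar_sign_bar[OF assms False] by simp
qed simp

abbreviation vv :: "vtx \<Rightarrow> 'a" where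
  "vv \<equiv> vval c b \<beta>3 \<beta>5 h"

lemma vv_bar: "vv (1, m) = c (betaf b \<beta>3 \<beta>5 (nat m - 1)) * bar_op m"
  by (simp add: bar_op_def mult.assoc)

lemma c_scaled_commute: "a * d = d * a \<Longrightarrow> a * (c z * d) = (c z * d) * a"
  by (metis c_left_commute mult.assoc)

lemma c_scaled_mult: "(c p * a) * (c q * d) = c (p * q) * (a * d)"
  by (simp only: mult.assoc c_left_commute[of a] c_mult_left)

lemma vv_commute:
  assumes "fst u \<le> 1" "fst w \<le> 1" "\<not> adj u w"
  shows "vv u * vv w = vv w * vv u"
proof -
  obtain a x a' y where uw: "u = (a, x)" "w = (a', y)" by fastforce
  let ?\<beta> = "\<lambda>m. betaf b \<beta>3 \<beta>5 (nat m - 1)"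
  have "a = 0 \<or> a = 1" "a' = 0 \<or> a' = 1" using assms uw by auto
  then consider "a = 0" "a' = 0" | "a = 0" "a' = 1" | "a = 1" "a' = 0" | "a = 1" "a' = 1" by blast
  then show ?thesis
  proof cases
    case 1 then show ?thesis using assms uw h_commute[of x y] by simp
  next
    case 2
    then have "vv u = h x" "vv w = c (?\<beta> y) * bar_op y" "\<not> bar_adj y x"
      using assms uw vv_bar by auto
    then show ?thesis using c_scaled_commute[OF h_bar_op_commute] by simp
  next
    case 3
    then have "vv u = c (?\<beta> x) * bar_op x" "vv w = h y" "\<not> bar_adj x y"
      using assms uw vv_bar by auto
    then show ?thesis using c_scaled_commute[OF h_bar_op_commute] by simp
  next
    case 4
    then have "vv u = c (?\<beta> x) * bar_op x" "vv w = c (?\<beta> y) * bar_op y" "\<bar>x - y\<bar> \<noteq> 1"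
      using assms uw vv_bar by auto
    then show ?thesis using bar_op_commute by (simp only: c_scaled_mult mult.commute[of "?\<beta> x"])
  qed
qed

section \<open>Recursion for the transfer matrix\<close>

abbreviation tr :: "int \<Rightarrow> 'a" where
  "tr j \<equiv> indep_sum vv (vset j)"

lemma tr_nonpos: "j \<le> 0 \<Longrightarrow> tr j = 1"
  by (simp add: vset_nonpos indep_sum_empty)

lemma indep_sum_vv_delete:
  assumes "finite X" "\<forall>u\<in>X. fst u \<le> 1" "v \<in> X"
  shows "indep_sum vv X = indep_sum vv (X - {v}) + vv v * indep_sum vv (X - {v} - {w. adj v w})"
proof (rule indep_sum_delete[OF assms(1,3)])
  fix u w assume "u \<in> X" "w \<in> X" "\<not> adj u w"
  with assms(2) show "vv u * vv w = vv w * vv u" by (intro vv_commute) simp_all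
qed

lemma tr_delete:
  "v \<in> vset j \<Longrightarrow> tr j = indep_sum vv (vset j - {v}) + vv v * indep_sum vv (vset j - {v} - {w. adj v w})"
  by (rule indep_sum_vv_delete[OF finite_vset vset_fst_le_1])

lemma tr_odd:
  assumes "1 \<le> m" shows "tr (2*m - 1) = tr (2*m - 2) + h (2*m - 1) * tr (2*m - 4)"
  using tr_delete[of "(0, 2*m - 1)" "2*m - 1"] assms
  unfolding vset_odd_minus_top_nbhd[OF assms] unfolding vset_odd_minus_top[OF assms]
  by (simp add: mem_vset)

lemma tr_even_minus_odd_top:
  "tr (2*m) = indep_sum vv (vset (2*m) - {(0, 2*m - 1)}) + h (2*m - 1) * tr (2*m - 4)"
proof (cases "1 \<le> m")
  case True
  then show ?thesis using tr_delete[of "(0, 2*m - 1)" "2*m"]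
    unfolding vset_even_minus_odd_top_nbhd[OF True] by (simp add: mem_vset)
qed (simp add: h_zero vset_nonpos)

lemma tr_2: "tr 2 = 1 + h 1 + h 2"
  using tr_delete[of "(0, 2)" 2] tr_odd[of 1]
  unfolding vset_2_minus_top_nbhd unfolding vset_2_minus_top
  by (simp add: mem_vset indep_sum_empty tr_nonpos)

lemma tr_even:
  assumes m: "2 \<le> m"
  shows "tr (2*m) = tr (2*m - 2) + h (2*m - 1) * tr (2*m - 4)
     + h (2*m) * (tr (2*m - 4) + h (2*m - 3) * tr (2*m - 6))
     + vv (1, m) * ((tr (2*m - 4) - h (2*m - 5) * tr (2*m - 8)) + h (2*m - 2) * tr (2*m - 6))"
proof -
  let ?X = "insert (1, m) (vset (2*m - 1))"
  let ?Y = "vset (2*m - 4) - {(0, 2*m - 5)}"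
  have "tr (2*m) = indep_sum vv ?X + h (2*m) * tr (2*m - 3)"
    using tr_delete[of "(0, 2*m)" "2*m"] m
    unfolding vset_even_minus_top_nbhd[OF m] unfolding vset_even_minus_top[OF m]
    by (simp add: mem_vset)
  also have "indep_sum vv ?X = tr (2*m - 1) + vv (1, m) * indep_sum vv (insert (0, 2*m - 2) ?Y)"
  proof -
    have "?X - {(1, m)} = vset (2*m - 1)"
      using bar_vertex_notin_vset_odd[of m] by simp
    moreover have "\<forall>u\<in>?X. fst u \<le> 1" using vset_fst_le_1[of "2*m - 1"] by simp
    ultimately show ?thesis
      using indep_sum_vv_delete[of ?X "(1, m)"] vset_odd_minus_bar_nbhd[OF m]
      by (simp add: finite_vset)
  qed
  also have "indep_sum vv (insert (0, 2*m - 2) ?Y) = indep_sum vv ?Y + h (2*m - 2) * tr (2*m - 6)"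
  proof -
    have "insert (0, 2*m - 2) ?Y - {(0, 2*m - 2)} = ?Y" by (simp add: mem_vset)
    moreover have "\<forall>u\<in>insert (0, 2*m - 2) ?Y. fst u \<le> 1" using vset_fst_le_1[of "2*m - 4"] by simp
    ultimately show ?thesis
      using indep_sum_vv_delete[of "insert (0, 2*m - 2) ?Y" "(0, 2*m - 2)"]
        vset_minus_second_top_nbhd[OF m]
      by (simp add: finite_vset)
  qed
  also have "indep_sum vv ?Y = tr (2*m - 4) - h (2*m - 5) * tr (2*m - 8)"
    using tr_even_minus_odd_top[of "m - 2"] by (simp add: algebra_simps)
  also have "tr (2*m - 1) = tr (2*m - 2) + h (2*m - 1) * tr (2*m - 4)"
    using tr_odd[of m] m by simp
  also have "tr (2*m - 3) = tr (2*m - 4) + h (2*m - 3) * tr (2*m - 6)"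
    using tr_odd[of "m - 1"] m by (simp add: algebra_simps)
  finally show ?thesis by (simp add: add_ac)
qed

lemma bar_op_reorder: "bar_op m = h (2*m) * (h (2*m - 3) * h (2*m - 2))"
proof -
  have "bar_op m = h (2*m - 2) * (h (2*m) * h (2*m - 3))"
    by (simp add: bar_op_def mult.assoc h_commute[of "2*m - 3" "2*m"])
  also have "\<dots> = - (h (2*m) * (h (2*m - 2) * h (2*m - 3)))"
    by (simp add: h_anticommute[of "2*m - 2" "2*m"] flip: mult.assoc)
  also have "\<dots> = h (2*m) * (h (2*m - 3) * h (2*m - 2))"
    by (simp add: h_anticommute[of "2*m - 2" "2*m - 3"])
  finally show ?thesis .
qed

text \<open>The five-term recursion shared by T_2k(-1) and V_2k (both indexed by k).\<close>

definition chain_step :: "(int \<Rightarrow> 'a) \<Rightarrow> int \<Rightarrow> 'a" where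
  "chain_step f k = f (k - 1) + h (2*k - 1) * f (k - 2) + h (2*k) * f (k - 2)
     + c (1 + betaf b \<beta>3 \<beta>5 (nat k - 1) * (b (2*k - 2))\<^sup>2) * (h (2*k) * (h (2*k - 3) * f (k - 3)))
     + c (betaf b \<beta>3 \<beta>5 (nat k - 1))
         * (h (2*k) * (h (2*k - 3) * (h (2*k - 2) * (f (k - 2) - h (2*k - 5) * f (k - 4)))))"

lemma chain_step_cong: "(\<And>j. k - 4 \<le> j \<Longrightarrow> j \<le> k - 1 \<Longrightarrow> f j = f' j) \<Longrightarrow> chain_step f k = chain_step f' k"
  unfolding chain_step_def by simp

lemma tr_chain_step:
  assumes "1 \<le> k" shows "tr (2*k) = chain_step (\<lambda>j. tr (2*j)) k"
proof (cases "k = 1")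
  case True
  then show ?thesis using tr_2 h_zero[of "-1"] by (simp add: chain_step_def tr_nonpos)
next
  case False
  then have k: "2 \<le> k" using assms by simp
  let ?\<beta> = "betaf b \<beta>3 \<beta>5 (nat k - 1)" and ?P = "h (2*k) * (h (2*k - 3) * tr (2*k - 6))"
  have "vv (1, k) * ((tr (2*k - 4) - h (2*k - 5) * tr (2*k - 8)) + h (2*k - 2) * tr (2*k - 6))
     = c ?\<beta> * (h (2*k) * (h (2*k - 3) * (h (2*k - 2) * (tr (2*k - 4) - h (2*k - 5) * tr (2*k - 8)))))
       + c (?\<beta> * (b (2*k - 2))\<^sup>2) * ?P"
    unfolding vv_bar bar_op_reorder
    by (simp only: distrib_left mult.assoc h_square_left h_c_left_commute c_mult_left)
  moreover have "c (1 + ?\<beta> * (b (2*k - 2))\<^sup>2) * ?P = ?P + c (?\<beta> * (b (2*k - 2))\<^sup>2) * ?P"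
    by (simp add: c_add distrib_right)
  moreover have "2 * (k - j) = 2*k - 2*j" for j :: int by simp
  ultimately show ?thesis
    unfolding chain_step_def tr_even[OF k] by (simp add: distrib_left add_ac)
qed

end

section \<open>The circuit\<close>

definition gate_bar :: "(complex \<Rightarrow> 'a::ring_1) \<Rightarrow> (int \<Rightarrow> complex) \<Rightarrow> (int \<Rightarrow> complex)
    \<Rightarrow> (int \<Rightarrow> 'a) \<Rightarrow> int \<Rightarrow> 'a" where
  "gate_bar c b \<theta> h j = c (cos (\<theta> j / 2)) - c (sin (\<theta> j / 2) / b j) * h j"

fun gates_fwd :: "(complex \<Rightarrow> 'a::ring_1) \<Rightarrow> (int \<Rightarrow> complex) \<Rightarrow> (int \<Rightarrow> complex)
    \<Rightarrow> (int \<Rightarrow> 'a) \<Rightarrow> nat \<Rightarrow> 'a" where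
  "gates_fwd c b \<theta> h 0 = 1"
| "gates_fwd c b \<theta> h (Suc n) =
     gates_fwd c b \<theta> h n * (gate c b \<theta> h (2 * int n + 2) * gate c b \<theta> h (2 * int n + 1))"

fun gates_rev :: "(complex \<Rightarrow> 'a::ring_1) \<Rightarrow> (int \<Rightarrow> complex) \<Rightarrow> (int \<Rightarrow> complex)
    \<Rightarrow> (int \<Rightarrow> 'a) \<Rightarrow> nat \<Rightarrow> 'a" where
  "gates_rev c b \<theta> h 0 = 1"
| "gates_rev c b \<theta> h (Suc n) =
     (gate c b \<theta> h (2 * int n + 1) * gate c b \<theta> h (2 * int n + 2)) * gates_rev c b \<theta> h n"

lemma upto_1_Suc: "[1..int (Suc n)] = [1..int n] @ [int n + 1]"
  using upto_rec2[of 1 "int n + 1"] by (simp add: add.commute)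

lemma gates_fwd_prod_list:
  "gates_fwd c b \<theta> h n = prod_list (map (\<lambda>i. gate c b \<theta> h (2*i) * gate c b \<theta> h (2*i - 1)) [1..int n])"
proof (induction n)
  case (Suc n)
  show ?case unfolding upto_1_Suc
    by (simp only: gates_fwd.simps Suc.IH) (simp add: distrib_left add.commute)
qed simp

lemma gates_rev_prod_list:
  "gates_rev c b \<theta> h n = prod_list (map (\<lambda>i. gate c b \<theta> h (2*i - 1) * gate c b \<theta> h (2*i)) (rev [1..int n]))"
proof (induction n)
  case (Suc n)
  show ?case unfolding upto_1_Suc
    by (simp only: gates_rev.simps Suc.IH) (simp add: distrib_left add.commute)
qed simp

lemma circV_gates: "circV c b \<theta> h k = gates_fwd c b \<theta> h k * gates_rev c b \<theta> h k"
  by (simp add: circV_def gates_fwd_prod_list gates_rev_prod_list)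

locale gate_circuit = chain_algebra c h b K \<beta>3 \<beta>5
  for c :: "complex \<Rightarrow> 'a::ring_1" and h b K \<beta>3 \<beta>5 +
  fixes \<theta> :: "int \<Rightarrow> complex"
begin

abbreviation g :: "int \<Rightarrow> 'a" where "g \<equiv> gate c b \<theta> h"
abbreviation gb :: "int \<Rightarrow> 'a" where "gb \<equiv> gate_bar c b \<theta> h"

lemmas c_normalize = h_c_commute h_c_left_commute c_mult_left c_mult[symmetric] mult.assoc
  distrib_left distrib_right left_diff_distrib right_diff_distrib c_add c_diff c_minus
  mult.commute mult.left_commute

lemma gate_bar_gate:
  assumes "1 \<le> j" "j \<le> 2 * int K" shows "gb j * g j = c (cos (\<theta> j))" and "g j * gb j = c (cos (\<theta> j))"
proof -
  have "b j \<noteq> 0" using b_nz assms by auto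
  then have cos_eq: "c ((cos (\<theta> j / 2))\<^sup>2) - c ((sin (\<theta> j / 2) / b j)\<^sup>2) * (h j * h j) = c (cos (\<theta> j))"
    using cos_double[of "\<theta> j / 2"] by (simp add: h_square c_normalize power_divide)
  have "gb j * g j = c ((cos (\<theta> j / 2))\<^sup>2) - c ((sin (\<theta> j / 2) / b j)\<^sup>2) * (h j * h j)"
    unfolding gate_def gate_bar_def by (simp add: c_normalize power2_eq_square)
  then show "gb j * g j = c (cos (\<theta> j))" using cos_eq by simp
  have "g j * gb j = c ((cos (\<theta> j / 2))\<^sup>2) - c ((sin (\<theta> j / 2) / b j)\<^sup>2) * (h j * h j)"
    unfolding gate_def gate_bar_def by (simp add: c_normalize power2_eq_square)
  then show "g j * gb j = c (cos (\<theta> j))" using cos_eq by simp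
qed

lemma gate_square:
  assumes "1 \<le> j" "j \<le> 2 * int K" shows "g j * g j = 1 + c (sin (\<theta> j) / b j) * h j"
proof -
  have bj: "b j \<noteq> 0" using b_nz assms by auto
  have sc: "c ((cos (\<theta> j / 2))\<^sup>2) + c ((sin (\<theta> j / 2))\<^sup>2) = 1"
    using sin_cos_squared_add[of "\<theta> j / 2"] by (metis add.commute c_1 c_add)
  have double: "c x * a + c x * a = c (2 * x) * a" for x a
    by (metis c_add distrib_right mult_2)
  have "g j * g j = c ((cos (\<theta> j / 2))\<^sup>2) + c ((sin (\<theta> j / 2) / b j)\<^sup>2) * (h j * h j)
        + (c (sin (\<theta> j / 2) * cos (\<theta> j / 2) / b j) * h j + c (sin (\<theta> j / 2) * cos (\<theta> j / 2) / b j) * h j)"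
    unfolding gate_def by (simp add: c_normalize power2_eq_square)
  also have "\<dots> = c ((cos (\<theta> j / 2))\<^sup>2) + c ((sin (\<theta> j / 2) / b j)\<^sup>2) * (h j * h j)
        + c (2 * (sin (\<theta> j / 2) * cos (\<theta> j / 2) / b j)) * h j"
    by (simp only: double)
  also have "\<dots> = 1 + c (sin (\<theta> j) / b j) * h j"
    using bj sc sin_double[of "\<theta> j / 2"] by (simp add: h_square c_normalize power_divide)
  finally show ?thesis .
qed

lemma gate_h_anticommute:
  assumes "\<bar>i - j\<bar> \<in> {1, 2}" shows "g j * h i = h i * gb j" and "gb j * h i = h i * g j"
proof -
  have "h j * h i = - (h i * h j)" using h_anticommute[of j i] assms by (auto simp: abs_minus_commute)
  then show "g j * h i = h i * gb j" "gb j * h i = h i * g j"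
    unfolding gate_def gate_bar_def by (simp_all add: c_normalize)
qed

lemma gate_h_commute:
  assumes "\<bar>i - j\<bar> \<notin> {1, 2}" shows "g j * h i = h i * g j" and "gb j * h i = h i * gb j"
proof -
  have "h j * h i = h i * h j" using h_commute[of j i] assms by (auto simp: abs_minus_commute)
  then show "g j * h i = h i * g j" "gb j * h i = h i * gb j"
    unfolding gate_def gate_bar_def by (simp_all add: c_normalize)
qed

abbreviation Gf :: "nat \<Rightarrow> 'a" where "Gf \<equiv> gates_fwd c b \<theta> h"
abbreviation Gr :: "nat \<Rightarrow> 'a" where "Gr \<equiv> gates_rev c b \<theta> h"

definition sandwich :: "nat \<Rightarrow> 'a \<Rightarrow> 'a" where
  "sandwich n x = Gf n * (x * Gr n)"

abbreviation circ :: "nat \<Rightarrow> 'a" where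
  "circ n \<equiv> sandwich n 1"

lemma gates_fwd_h_commute: "2 * int n + 3 \<le> i \<Longrightarrow> Gf n * h i = h i * Gf n"
proof (induction n)
  case (Suc n)
  have g1: "g (2 * int n + 1) * h i = h i * g (2 * int n + 1)"
    by (rule gate_h_commute) (use Suc.prems in auto)
  have g2: "g (2 * int n + 2) * h i = h i * g (2 * int n + 2)"
    by (rule gate_h_commute) (use Suc.prems in auto)
  have "Gf (Suc n) * h i = Gf n * (g (2 * int n + 2) * (g (2 * int n + 1) * h i))"
    by (simp add: mult.assoc)
  also have "\<dots> = (Gf n * h i) * (g (2 * int n + 2) * g (2 * int n + 1))"
    by (metis g1 g2 mult.assoc)
  also have "\<dots> = h i * Gf (Suc n)"
    using Suc by (simp add: mult.assoc)
  finally show ?case .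
qed simp

lemma gate_h_anticommute_left: "\<bar>i - j\<bar> \<in> {1, 2} \<Longrightarrow> g j * (h i * x) = h i * (gb j * x)"
  by (metis gate_h_anticommute(1) mult.assoc)

lemma gate_bar_h_anticommute_left: "\<bar>i - j\<bar> \<in> {1, 2} \<Longrightarrow> gb j * (h i * x) = h i * (g j * x)"
  by (metis gate_h_anticommute(2) mult.assoc)

lemma gate_h_commute_left: "\<bar>i - j\<bar> \<notin> {1, 2} \<Longrightarrow> g j * (h i * x) = h i * (g j * x)"
  by (metis gate_h_commute(1) mult.assoc)

lemma gate_bar_h_commute_left: "\<bar>i - j\<bar> \<notin> {1, 2} \<Longrightarrow> gb j * (h i * x) = h i * (gb j * x)"
  by (metis gate_h_commute(2) mult.assoc)

lemma gate_bar_gate_left: "1 \<le> j \<Longrightarrow> j \<le> 2 * int K \<Longrightarrow> gb j * (g j * x) = c (cos (\<theta> j)) * x"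
  by (metis gate_bar_gate(1) mult.assoc)

lemma gate_square_left:
  "1 \<le> j \<Longrightarrow> j \<le> 2 * int K \<Longrightarrow> g j * (g j * x) = x + c (sin (\<theta> j) / b j) * (h j * x)"
  by (simp add: gate_square distrib_right mult.assoc flip: mult.assoc[of "g j"])

lemma gates_fwd_h_commute_left: "2 * int n + 3 \<le> i \<Longrightarrow> Gf n * (h i * x) = h i * (Gf n * x)"
  by (metis gates_fwd_h_commute mult.assoc)

lemma c_left_commute_gates:
  "g j * (c z * x) = c z * (g j * x)" "gb j * (c z * x) = c z * (gb j * x)"
  "Gf n * (c z * x) = c z * (Gf n * x)"
  by (simp_all add: c_left_commute)

lemma add_3_2n: "3 + 2 * int n = 2 * int n + 3" "4 + 2 * int n = 2 * int n + 4" by simp_all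

text \<open>Oriented so that the simplifier moves every h to the left through the gates, turning g into gb
  where they anticommute.\<close>

lemmas gate_normalize = gate_h_anticommute_left gate_bar_h_anticommute_left gate_h_commute_left
  gate_bar_h_commute_left gate_bar_gate_left gate_square_left gates_fwd_h_commute_left
  c_left_commute_gates h_c_left_commute c_mult_left
  mult.assoc distrib_left distrib_right add.assoc add_3_2n

lemma gate_pair_square:
  assumes "n < K"
  shows "g (2 * int n + 2) * g (2 * int n + 1) * (g (2 * int n + 1) * g (2 * int n + 2))
    = 1 + c (sin (\<theta> (2 * int n + 2)) / b (2 * int n + 2)) * h (2 * int n + 2)
        + c (sin (\<theta> (2 * int n + 1)) * cos (\<theta> (2 * int n + 2)) / b (2 * int n + 1)) * h (2 * int n + 1)"
proof -
  let ?g1 = "g (2 * int n + 1)" and ?g2 = "g (2 * int n + 2)"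
  have range: "1 \<le> 2 * int n + 1" "2 * int n + 1 \<le> 2 * int K" "1 \<le> 2 * int n + 2" "2 * int n + 2 \<le> 2 * int K"
    using assms by auto
  have "?g2 * ?g1 * (?g1 * ?g2) = ?g2 * (?g1 * ?g1) * ?g2" by (simp add: mult.assoc)
  also have "\<dots> = ?g2 * ?g2 + c (sin (\<theta> (2 * int n + 1)) / b (2 * int n + 1)) * (?g2 * h (2 * int n + 1) * ?g2)"
    using range by (simp add: gate_square distrib_left distrib_right c_left_commute mult.assoc)
  also have "?g2 * h (2 * int n + 1) * ?g2 = h (2 * int n + 1) * (gb (2 * int n + 2) * ?g2)"
    by (simp add: gate_h_anticommute mult.assoc)
  also have "gb (2 * int n + 2) * ?g2 = c (cos (\<theta> (2 * int n + 2)))"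
    using range by (simp add: gate_bar_gate)
  finally show ?thesis
    using range by (simp add: gate_square c_normalize add.assoc)
qed

lemma circ_Suc:
  assumes "n < K"
  shows "circ (Suc n) = circ n + c (sin (\<theta> (2 * int n + 2)) / b (2 * int n + 2)) * sandwich n (h (2 * int n + 2))
        + c (sin (\<theta> (2 * int n + 1)) * cos (\<theta> (2 * int n + 2)) / b (2 * int n + 1)) * sandwich n (h (2 * int n + 1))"
proof -
  have "circ (Suc n) = Gf n * ((g (2 * int n + 2) * g (2 * int n + 1) * (g (2 * int n + 1) * g (2 * int n + 2))) * Gr n)"
    by (simp add: sandwich_def mult.assoc)
  then show ?thesis
    using assms by (simp only: gate_pair_square)
      (simp add: sandwich_def distrib_left distrib_right c_left_commute_gates mult.assoc)
qed

lemma sandwich_odd_Suc: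
  assumes "n < K"
  shows "sandwich (Suc n) (h (2 * int n + 3))
    = c (cos (\<theta> (2 * int n + 1)) * cos (\<theta> (2 * int n + 2))) * (h (2 * int n + 3) * circ n)"
  using assms unfolding sandwich_def by (simp add: gate_normalize)

lemma sandwich_even_Suc:
  assumes "n < K"
  shows "sandwich (Suc n) (h (2 * int n + 4)) = h (2 * int n + 4) * (c (cos (\<theta> (2 * int n + 2))) * circ n
     + c (sin (\<theta> (2 * int n + 1)) / b (2 * int n + 1)) * sandwich n (h (2 * int n + 1))
     + c (sin (\<theta> (2 * int n + 1)) / b (2 * int n + 1) * (sin (\<theta> (2 * int n + 2)) / b (2 * int n + 2)))
        * sandwich n (h (2 * int n + 1) * h (2 * int n + 2)))"
  using assms unfolding sandwich_def by (simp add: gate_normalize)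

lemma sandwich_pair_Suc:
  assumes "n < K"
  shows "sandwich (Suc n) (h (2 * int n + 3) * h (2 * int n + 4))
    = h (2 * int n + 3) * (h (2 * int n + 4) * (c (cos (\<theta> (2 * int n + 1)))
        * (circ n + c (sin (\<theta> (2 * int n + 2)) / b (2 * int n + 2)) * sandwich n (h (2 * int n + 2)))))"
  using assms unfolding sandwich_def by (simp add: gate_normalize)

end

section \<open>Matching the two recursions\<close>

locale model = gate_circuit c h b K \<beta>3 \<beta>5 \<theta>
  for c :: "complex \<Rightarrow> 'a::ring_1" and h b K \<beta>3 \<beta>5 \<theta> +
  assumes th0: "\<theta> 0 = 0" and thm1: "\<theta> (-1) = 0"
    and cos_nz: "\<And>j. 1 \<le> j \<Longrightarrow> j \<le> 2 * int K \<Longrightarrow> cos (\<theta> j) \<noteq> 0"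
    and sin_even: "\<And>j. 1 \<le> j \<Longrightarrow> j \<le> int K \<Longrightarrow> sin (\<theta> (2*j)) = b (2*j) / cos (\<theta> (2*j - 2))"
    and sin_odd: "\<And>j. 1 \<le> j \<Longrightarrow> j \<le> int K \<Longrightarrow>
       sin (\<theta> (2*j - 1)) = b (2*j - 1) / (cos (\<theta> (2*j - 2)) * cos (\<theta> (2*j - 3)) * cos (\<theta> (2*j)))"
    and beta3: "\<beta>3 = 1 / (1 - (b 2)\<^sup>2)"
    and beta5: "\<beta>5 = 1 / (1 - (b 2)\<^sup>2 - (b 4)\<^sup>2)"
begin

abbreviation cs :: "int \<Rightarrow> complex" where "cs j \<equiv> cos (\<theta> j)"
abbreviation sn :: "int \<Rightarrow> complex" where "sn j \<equiv> sin (\<theta> j)"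

lemma cs_nonzero: "-1 \<le> j \<Longrightarrow> j \<le> 2 * int K \<Longrightarrow> cs j \<noteq> 0"
proof (cases "1 \<le> j")
  case False
  moreover assume "-1 \<le> j"
  ultimately have "j = 0 \<or> j = -1" by auto
  then show ?thesis using th0 thm1 by auto
qed (use cos_nz in auto)

lemma b_even_square:
  assumes "1 \<le> j" "j \<le> int K"
  shows "(b (2*j))\<^sup>2 = (1 - (cs (2*j))\<^sup>2) * (cs (2*j - 2))\<^sup>2"
proof -
  have "cs (2*j - 2) \<noteq> 0" using cs_nonzero assms by auto
  then have "b (2*j) = sn (2*j) * cs (2*j - 2)" using sin_even[OF assms] by simp
  then show ?thesis by (simp add: power_mult_distrib sin_squared_eq)
qed

lemma betaf_Suc3:
  "betaf b \<beta>3 \<beta>5 (n + 3) = betaf b \<beta>3 \<beta>5 (n + 2) /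
     ((b (2 * (int n + 1)))\<^sup>2 * betaf b \<beta>3 \<beta>5 (n + 1) - (b (2 * (int n + 3)))\<^sup>2 * betaf b \<beta>3 \<beta>5 (n + 2) + 1)"
proof -
  have "n + 3 = Suc (Suc (Suc n))" "2 * int (n + 3) - 4 = 2 * (int n + 1)" "2 * int (n + 3) = 2 * (int n + 3)"
    by simp_all
  then show ?thesis by (simp only: betaf.simps) (simp add: numeral_2_eq_2 numeral_3_eq_3)
qed

lemma betaf_closed_form:
  "1 \<le> m \<Longrightarrow> m < K \<Longrightarrow> betaf b \<beta>3 \<beta>5 m = 1 / ((cs (2 * int m - 2))\<^sup>2 * (cs (2 * int m))\<^sup>2)"
proof (induction m rule: less_induct)
  case (less m)
  let ?C = "\<lambda>i::int. (cs (2 * i))\<^sup>2"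
  have b2: "(b 2)\<^sup>2 = 1 - ?C 1" using b_even_square[of 1] less.prems th0 by simp
  consider "m = 1" | "m = 2" | n where "m = n + 3"
    using less.prems by (metis One_nat_def Suc_1 add.commute add_2_eq_Suc' le_Suc_eq
        le_add_diff_inverse le_zero_eq numeral_3_eq_3 not_less_eq_eq)
  then show ?case
  proof cases
    case 1
    then show ?thesis using b2 beta3 th0 by simp
  next
    case 2
    have "(b 4)\<^sup>2 = (1 - ?C 2) * ?C 1" using b_even_square[of 2] less.prems 2 by simp
    moreover have "cs 2 \<noteq> 0" using cs_nonzero[of 2] less.prems 2 by simp
    ultimately show ?thesis using 2 b2 beta5 by (simp add: numeral_2_eq_2 field_simps)
  next
    case 3
    have IH: "betaf b \<beta>3 \<beta>5 (n + 1) = 1 / (?C (int n) * ?C (int n + 1))"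
        "betaf b \<beta>3 \<beta>5 (n + 2) = 1 / (?C (int n + 1) * ?C (int n + 2))"
      using less.IH[of "n + 1"] less.IH[of "n + 2"] less.prems 3 by (simp_all add: algebra_simps)
    have "?C (int n) \<noteq> 0" "?C (int n + 1) \<noteq> 0" "?C (int n + 2) \<noteq> 0" "?C (int n + 3) \<noteq> 0"
      using cs_nonzero less.prems 3 by simp_all
    moreover have b_sq: "(b (2 * (int n + 1)))\<^sup>2 = (1 - ?C (int n + 1)) * ?C (int n)"
        "(b (2 * (int n + 3)))\<^sup>2 = (1 - ?C (int n + 3)) * ?C (int n + 2)"
      using b_even_square[of "int n + 1"] b_even_square[of "int n + 3"] less.prems 3
      by (simp_all add: algebra_simps)
    ultimately have "betaf b \<beta>3 \<beta>5 (n + 3) = 1 / (?C (int n + 2) * ?C (int n + 3))"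
      unfolding betaf_Suc3 IH b_sq by (simp add: field_simps)
    then show ?thesis using 3 by (simp add: algebra_simps)
  qed
qed

abbreviation circ_odd :: "nat \<Rightarrow> 'a" where "circ_odd n \<equiv> sandwich n (h (2 * int n + 1))"
abbreviation circ_even :: "nat \<Rightarrow> 'a" where "circ_even n \<equiv> sandwich n (h (2 * int n + 2))"
abbreviation circ_pair :: "nat \<Rightarrow> 'a" where "circ_pair n \<equiv> sandwich n (h (2 * int n + 1) * h (2 * int n + 2))"

lemma odd_coefficient:
  assumes "1 \<le> j" "j \<le> int K"
  shows "sn (2*j - 1) * cs (2*j) / b (2*j - 1) * (cs (2*j - 3) * cs (2*j - 2)) = 1"
proof -
  have "cs (2*j) \<noteq> 0" "cs (2*j - 2) \<noteq> 0" "cs (2*j - 3) \<noteq> 0" "b (2*j - 1) \<noteq> 0"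
    using cs_nonzero b_nz assms by auto
  then show ?thesis using sin_odd[OF assms] by (simp add: field_simps)
qed

lemma circ_odd_closed:
  "n \<le> K \<Longrightarrow> circ_odd n = c (cs (2 * int n - 1) * cs (2 * int n)) * (h (2 * int n + 1) * circ (n - 1))"
proof (cases n)
  case 0
  then show ?thesis using th0 thm1 by (simp add: sandwich_def)
next
  case (Suc m)
  moreover assume "n \<le> K"
  ultimately show ?thesis using sandwich_odd_Suc[of m] by (simp add: algebra_simps)
qed

lemma circ_pair_closed:
  "n \<le> K \<Longrightarrow> circ_pair n = c (cs (2 * int n - 1)) * (h (2 * int n + 1) * (h (2 * int n + 2) *
     (circ (n - 1) + c (sn (2 * int n) / b (2 * int n)) * circ_even (n - 1))))"
proof (cases n)
  case 0
  then show ?thesis using th0 thm1 by (simp add: sandwich_def)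
next
  case (Suc m)
  moreover assume "n \<le> K"
  ultimately show ?thesis using sandwich_pair_Suc[of m] by (simp add: algebra_simps h_c_left_commute)
qed

lemma circ_even_eq:
  "n \<le> K \<Longrightarrow> c (sn (2 * int n) / b (2 * int n)) * circ_even (n - 1)
     = circ n - circ (n - 1) - h (2 * int n - 1) * circ (n - 2)"
proof (cases n)
  case 0
  then show ?thesis using th0 h_out[of "-1"] by simp
next
  case (Suc m)
  moreover assume "n \<le> K"
  ultimately have m: "m < K" by simp
  have "sn (2 * int m + 1) * cs (2 * int m + 2) / b (2 * int m + 1) * (cs (2 * int m - 1) * cs (2 * int m)) = 1"
    using odd_coefficient[of "int m + 1"] m by (simp add: algebra_simps)
  then have "c (sn (2 * int m + 1) * cs (2 * int m + 2) / b (2 * int m + 1)) * circ_odd m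
      = h (2 * int m + 1) * circ (m - 1)"
    using circ_odd_closed[of m] m by (simp add: c_mult_left)
  then show ?thesis using circ_Suc[OF m] Suc by (simp add: algebra_simps)
qed

lemma circ_Suc_closed:
  "n < K \<Longrightarrow> circ (Suc n) = circ n + h (2 * int n + 1) * circ (n - 1)
     + c (sn (2 * int n + 2) / b (2 * int n + 2)) * circ_even n"
  using circ_even_eq[of "Suc n"] by (simp add: algebra_simps)

lemma circ_Suc_Suc:
  assumes "m + 2 \<le> K"
  shows "circ (m + 2) = circ (m + 1) + h (2 * int m + 3) * circ m
     + c (sn (2 * int m + 4) / b (2 * int m + 4) * cs (2 * int m + 2)) * (h (2 * int m + 4) * circ m)
     + c (sn (2 * int m + 4) / b (2 * int m + 4) * (sn (2 * int m + 1) / b (2 * int m + 1))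
          * (cs (2 * int m - 1) * cs (2 * int m)))
         * (h (2 * int m + 4) * (h (2 * int m + 1) * circ (m - 1)))
     + c (sn (2 * int m + 4) / b (2 * int m + 4)
          * (sn (2 * int m + 1) / b (2 * int m + 1) * (sn (2 * int m + 2) / b (2 * int m + 2))) * cs (2 * int m - 1))
         * (h (2 * int m + 4) * (h (2 * int m + 1) * (h (2 * int m + 2) * (circ m - h (2 * int m - 1) * circ (m - 2)))))"
proof -
  have pair: "circ_pair m = c (cs (2 * int m - 1))
      * (h (2 * int m + 1) * (h (2 * int m + 2) * (circ m - h (2 * int m - 1) * circ (m - 2))))"
    using circ_pair_closed[of m] circ_even_eq[of m] assms by simp
  have odd: "circ_odd m = c (cs (2 * int m - 1) * cs (2 * int m)) * (h (2 * int m + 1) * circ (m - 1))"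
    using circ_odd_closed[of m] assms by simp
  have even: "circ_even (Suc m) = h (2 * int m + 4) * (c (cs (2 * int m + 2)) * circ m
      + c (sn (2 * int m + 1) / b (2 * int m + 1)) * circ_odd m
      + c (sn (2 * int m + 1) / b (2 * int m + 1) * (sn (2 * int m + 2) / b (2 * int m + 2))) * circ_pair m)"
    using sandwich_even_Suc[of m] assms by (simp add: add.commute)
  have "circ (m + 2) = circ (m + 1) + h (2 * int m + 3) * circ m
      + c (sn (2 * int m + 4) / b (2 * int m + 4)) * circ_even (Suc m)"
    using circ_Suc_closed[of "Suc m"] assms by (simp add: algebra_simps)
  then show ?thesis
    unfolding even pair odd by (simp add: c_normalize)
qed

lemma sin_cos_at:
  assumes "m + 2 \<le> K"
  shows "sn (2 * int m + 4) = b (2 * int m + 4) / cs (2 * int m + 2)"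
    and "sn (2 * int m + 2) = b (2 * int m + 2) / cs (2 * int m)"
    and "sn (2 * int m + 1) = b (2 * int m + 1) / (cs (2 * int m) * cs (2 * int m - 1) * cs (2 * int m + 2))"
    and "betaf b \<beta>3 \<beta>5 (m + 1) = 1 / ((cs (2 * int m))\<^sup>2 * (cs (2 * int m + 2))\<^sup>2)"
proof -
  have idx: "2 * (int m + 2) = 2 * int m + 4" "2 * (int m + 2) - 2 = 2 * int m + 2"
    "2 * (int m + 1) = 2 * int m + 2" "2 * (int m + 1) - 2 = 2 * int m"
    "2 * (int m + 1) - 1 = 2 * int m + 1" "2 * (int m + 1) - 3 = 2 * int m - 1"
    "2 * int (m + 1) - 2 = 2 * int m" "2 * int (m + 1) = 2 * int m + 2" by simp_all
  show "sn (2 * int m + 4) = b (2 * int m + 4) / cs (2 * int m + 2)"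
    using sin_even[of "int m + 2", unfolded idx] assms by (simp add: add.commute)
  show "sn (2 * int m + 2) = b (2 * int m + 2) / cs (2 * int m)"
    using sin_even[of "int m + 1", unfolded idx] assms by simp
  show "sn (2 * int m + 1) = b (2 * int m + 1) / (cs (2 * int m) * cs (2 * int m - 1) * cs (2 * int m + 2))"
    using sin_odd[of "int m + 1", unfolded idx] assms by (simp add: add.commute)
  show "betaf b \<beta>3 \<beta>5 (m + 1) = 1 / ((cs (2 * int m))\<^sup>2 * (cs (2 * int m + 2))\<^sup>2)"
    using betaf_closed_form[of "m + 1", unfolded idx] assms by simp
qed

lemma circ_coefficients:
  assumes "m + 2 \<le> K"
  shows "sn (2 * int m + 4) / b (2 * int m + 4) * cs (2 * int m + 2) = 1"
    and "sn (2 * int m + 4) / b (2 * int m + 4) * (sn (2 * int m + 1) / b (2 * int m + 1))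
           * (cs (2 * int m - 1) * cs (2 * int m)) = 1 + betaf b \<beta>3 \<beta>5 (m + 1) * (b (2 * int m + 2))\<^sup>2"
    and "sn (2 * int m + 4) / b (2 * int m + 4)
           * (sn (2 * int m + 1) / b (2 * int m + 1) * (sn (2 * int m + 2) / b (2 * int m + 2)))
           * cs (2 * int m - 1) = betaf b \<beta>3 \<beta>5 (m + 1)"
proof -
  have nz: "cs (2 * int m - 1) \<noteq> 0" "cs (2 * int m) \<noteq> 0" "cs (2 * int m + 2) \<noteq> 0"
     "b (2 * int m + 1) \<noteq> 0" "b (2 * int m + 2) \<noteq> 0" "b (2 * int m + 4) \<noteq> 0"
    using cs_nonzero b_nz assms by auto
  note sc = sin_cos_at[OF assms]
  show "sn (2 * int m + 4) / b (2 * int m + 4) * cs (2 * int m + 2) = 1"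
    using nz sc(1) by simp
  have "1 + betaf b \<beta>3 \<beta>5 (m + 1) * (b (2 * int m + 2))\<^sup>2 = 1 / (cs (2 * int m + 2))\<^sup>2"
  proof -
    have "b (2 * int m + 2) = sn (2 * int m + 2) * cs (2 * int m)" using sc(2) nz by simp
    moreover have "(sn (2 * int m + 2))\<^sup>2 + (cs (2 * int m + 2))\<^sup>2 = 1" by simp
    ultimately show ?thesis unfolding sc(4) using nz by (simp add: field_simps)
  qed
  moreover have "sn (2 * int m + 4) / b (2 * int m + 4) * (sn (2 * int m + 1) / b (2 * int m + 1))
      * (cs (2 * int m - 1) * cs (2 * int m)) = 1 / (cs (2 * int m + 2))\<^sup>2"
    unfolding sc(1) sc(3) using nz by (simp add: field_simps power2_eq_square)
  ultimately show "sn (2 * int m + 4) / b (2 * int m + 4) * (sn (2 * int m + 1) / b (2 * int m + 1))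
      * (cs (2 * int m - 1) * cs (2 * int m)) = 1 + betaf b \<beta>3 \<beta>5 (m + 1) * (b (2 * int m + 2))\<^sup>2"
    by simp
  show "sn (2 * int m + 4) / b (2 * int m + 4)
      * (sn (2 * int m + 1) / b (2 * int m + 1) * (sn (2 * int m + 2) / b (2 * int m + 2)))
      * cs (2 * int m - 1) = betaf b \<beta>3 \<beta>5 (m + 1)"
    unfolding sc(1) sc(2) sc(3) sc(4) using nz by (simp add: field_simps power2_eq_square)
qed

lemma circ_chain_step:
  assumes "1 \<le> k" "k \<le> int K"
  shows "circ (nat k) = chain_step (\<lambda>j. circ (nat j)) k"
proof (cases "k = 1")
  case True
  have "sn 2 / b 2 = 1" using sin_even[of 1] assms th0 b_nz[of 2] by simp
  then have "circ 1 = 1 + h 1 + h 2"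
    using circ_Suc_closed[of 0] assms by (simp add: sandwich_def)
  then show ?thesis using True h_out[of "-1"] by (simp add: chain_step_def sandwich_def)
next
  case False
  define m where "m = nat (k - 2)"
  have k: "k = int m + 2" and mK: "m + 2 \<le> K" using False assms unfolding m_def by simp_all
  have "nat k - 1 = m + 1" "nat k = m + 2" "nat (k - 1) = m + 1" "nat (k - 2) = m"
    "nat (k - 3) = m - 1" "nat (k - 4) = m - 2" using k by auto
  moreover have "2*k - 1 = 2 * int m + 3" "2*k = 2 * int m + 4" "2*k - 3 = 2 * int m + 1"
    "2*k - 2 = 2 * int m + 2" "2*k - 5 = 2 * int m - 1" using k by simp_all
  ultimately show ?thesis
    using circ_Suc_Suc[OF mK, unfolded circ_coefficients[OF mK] c_1 mult_1_left]
    by (simp add: chain_step_def add.commute)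
qed

lemma tr_eq_circ: "j \<le> int K \<Longrightarrow> tr (2 * j) = circ (nat j)"
proof (induction "nat j" arbitrary: j rule: less_induct)
  case less
  show ?case
  proof (cases "j \<le> 0")
    case True
    then show ?thesis by (simp add: tr_nonpos sandwich_def)
  next
    case False
    then have "tr (2 * j) = chain_step (\<lambda>i. tr (2 * i)) j" by (intro tr_chain_step) simp
    also have "\<dots> = chain_step (\<lambda>i. circ (nat i)) j"
      using less False by (intro chain_step_cong) simp
    also have "\<dots> = circ (nat j)"
      using less False by (intro circ_chain_step[symmetric]) simp_all
    finally show ?thesis .
  qed
qed

end

theorem mainTheorem12:
  fixes c :: "complex \<Rightarrow> 'a::ring_1"
    and h :: "int \<Rightarrow> 'a"
    and b \<theta> :: "int \<Rightarrow> complex"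
    and k :: nat
    and \<beta>3 \<beta>5 :: complex
  assumes alg: "alg_emb c"
    and k1: "1 \<le> k"
    and h_out: "\<And>j. j < 1 \<or> j > 2 * int k \<Longrightarrow> h j = 0"
    and b_out: "\<And>j. j < 1 \<or> j > 2 * int k \<Longrightarrow> b j = 0"
    and h_sq: "\<And>m. 1 \<le> m \<Longrightarrow> m \<le> 2 * int k \<Longrightarrow> h m * h m = c ((b m)\<^sup>2)"
    and h_ac1: "\<And>m. 1 \<le> m \<Longrightarrow> m + 1 \<le> 2 * int k \<Longrightarrow> h m * h (m + 1) = - (h (m + 1) * h m)"
    and h_ac2: "\<And>m. 1 \<le> m \<Longrightarrow> m + 2 \<le> 2 * int k \<Longrightarrow> h m * h (m + 2) = - (h (m + 2) * h m)"
    and h_comm: "\<And>m l. 1 \<le> m \<Longrightarrow> m \<le> 2 * int k \<Longrightarrow> 1 \<le> l \<Longrightarrow> l \<le> 2 * int k \<Longrightarrow>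
                   \<bar>l - m\<bar> > 2 \<Longrightarrow> h m * h l = h l * h m"
    and b_nz: "\<And>j. 1 \<le> j \<Longrightarrow> j \<le> 2 * int k \<Longrightarrow> b j \<noteq> 0"
    and th0: "\<theta> 0 = 0" and thm1: "\<theta> (-1) = 0"
    and cos_nz: "\<And>j. 1 \<le> j \<Longrightarrow> j \<le> 2 * int k \<Longrightarrow> cos (\<theta> j) \<noteq> 0"
    and sin_even: "\<And>j. 1 \<le> j \<Longrightarrow> j \<le> int k \<Longrightarrow>
                     sin (\<theta> (2*j)) = b (2*j) / cos (\<theta> (2*j - 2))"
    and sin_odd: "\<And>j. 1 \<le> j \<Longrightarrow> j \<le> int k \<Longrightarrow>
                     sin (\<theta> (2*j - 1)) = b (2*j - 1) /
                       (cos (\<theta> (2*j - 2)) * cos (\<theta> (2*j - 3)) * cos (\<theta> (2*j)))"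
    and beta3: "\<beta>3 = 1 / (1 - (b 2)\<^sup>2)"
    and beta5: "\<beta>5 = 1 / (1 - (b 2)\<^sup>2 - (b 4)\<^sup>2)"
    and denom_nz: "\<And>m. 3 \<le> m \<Longrightarrow> m < k \<Longrightarrow>
                     (b (2 * int m - 4))\<^sup>2 * betaf b \<beta>3 \<beta>5 (m - 2)
                     - (b (2 * int m))\<^sup>2 * betaf b \<beta>3 \<beta>5 (m - 1) + 1 \<noteq> 0"
  shows "(\<forall>j::nat. 2 \<le> j \<and> j \<le> k \<longrightarrow>
            betaf b \<beta>3 \<beta>5 (j - 1) =
              1 / ((cos (\<theta> (2 * int j - 4)))\<^sup>2 * (cos (\<theta> (2 * int j - 2)))\<^sup>2))
         \<and> transfer c b \<beta>3 \<beta>5 h (2 * int k) (-1) = circV c b \<theta> h k"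
proof -
  interpret model c h b k \<beta>3 \<beta>5 \<theta>
    by unfold_locales (fact assms)+
  have "betaf b \<beta>3 \<beta>5 (j - 1) = 1 / ((cs (2 * int j - 4))\<^sup>2 * (cs (2 * int j - 2))\<^sup>2)"
    if "2 \<le> j" "j \<le> k" for j
  proof -
    have "2 * int (j - 1) - 2 = 2 * int j - 4" "2 * int (j - 1) = 2 * int j - 2" using that by auto
    then show ?thesis using betaf_closed_form[of "j - 1"] that by simp
  qed
  moreover have "transfer c b \<beta>3 \<beta>5 h (2 * int k) (-1) = circV c b \<theta> h k"
    using transfer_minus_one[of c] tr_eq_circ[of "int k"] by (simp add: circV_gates sandwich_def)
  ultimately show ?thesis by blast
qed

end
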